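(* Consider the two-agent noisy-query allocation problem described in the context, with gap $\Delta>0$ (i.e., $\mathrm{OptEnvy}\le -\Delta$) and noise variance $\sigma^2>0$. Consider the following algorithm with query budget $q$: query each item $\tau=q/m$ times, obtaining $\{y^a_{i,t},y^b_{i,t}\}_{t=1}^{\tau}$; form $\widehat{\mu}^\nu_i=\frac1\tau\sum_{t=1}^\tau y^\nu_{i,t}$ for $\nu\in\{a,b\}$, $i\in[m]$; and, writing $\widehat{\mu}^\nu_S=\sum_{i\in S}\widehat{\mu}^\nu_i$, output the allocation $\mathcal{A}=(\mathcal{A}_a,\mathcal{A}_b)$ (over all partitions of $[m]$) maximizing $\min\{\widehat{\mu}^a_{\mathcal{A}_a}-\widehat{\mu}^a_{\mathcal{A}_b},\ \widehat{\mu}^b_{\mathcal{A}_b}-\widehat{\mu}^b_{\mathcal{A}_a}\}$. Then for any $\delta\in(0,1)$, this algorithm outputs an envy-free allocation with probability at least $1-\delta$ when the number of queries is set to $$q=m\left\lceil 32\sigma^2\log(4m/\delta)\cdot \frac{m^2}{\Delta^2}\right\rceil,$$ which is $\widetilde{O}(m^3/\Delta^2)$.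
   Context: Two agents $a,b$ and $m$ indivisible items $[m]=\{1,\dots,m\}$. Agent $\nu\in\{a,b\}$ has an unknown utility $\mu^\nu_i\in[0,1]$ for item $i$, and utilities are additive: the value of a set $S$ to $\nu$ is $\sum_{i\in S}\mu^\nu_i$. An allocation is a partition $\mathcal{A}=(\mathcal{A}_a,\mathcal{A}_b)$ of $[m]$. $\mathrm{Envy}_{a\to b}(\mathcal{A})=\sum_{i\in\mathcal{A}_b}\mu^a_i-\sum_{i\in\mathcal{A}_a}\mu^a_i$, $\mathrm{Envy}_{b\to a}(\mathcal{A})=\sum_{i\in\mathcal{A}_a}\mu^b_i-\sum_{i\in\mathcal{A}_b}\mu^b_i$, $\mathrm{Envy}(\mathcal{A})=\max\{\mathrm{Envy}_{a\to b}(\mathcal{A}),\mathrm{Envy}_{b\to a}(\mathcal{A})\}$; $\mathcal{A}$ is envy-free if $\mathrm{Envy}(\mathcal{A})\le 0$. $\mathrm{OptEnvy}=\min_{\mathcal{A}}\mathrm{Envy}(\mathcal{A})$. A query to item $i$ returns a pair $(y^a,y^b)$ with $y^\nu\sim N(\mu^\nu_i,\sigma^2)$; all query outcomes (across queries and across the two agents) are independent. $q$ is the total number of queries. $\log$ is the natural logarithm; $\widetilde O$ hides logarithmic factors. *)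

theory Defs
  imports "HOL-Probability.Probability"
begin

text \<open>Two agents. Items are indexed by 0..m-1 (i.e. the set {..<m}).
  An allocation is given by the set A of items of agent a; agent b gets the rest.\<close>

datatype agent = Agent_a | Agent_b

definition items :: "nat \<Rightarrow> nat set" where
  "items m = {..<m}"

definition envy_ab :: "(agent \<Rightarrow> nat \<Rightarrow> real) \<Rightarrow> nat \<Rightarrow> nat set \<Rightarrow> real" where
  "envy_ab mu m A = (\<Sum>i\<in>items m - A. mu Agent_a i) - (\<Sum>i\<in>A. mu Agent_a i)"

definition envy_ba :: "(agent \<Rightarrow> nat \<Rightarrow> real) \<Rightarrow> nat \<Rightarrow> nat set \<Rightarrow> real" where
  "envy_ba mu m A = (\<Sum>i\<in>A. mu Agent_b i) - (\<Sum>i\<in>items m - A. mu Agent_b i)"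

definition Envy :: "(agent \<Rightarrow> nat \<Rightarrow> real) \<Rightarrow> nat \<Rightarrow> nat set \<Rightarrow> real" where
  "Envy mu m A = max (envy_ab mu m A) (envy_ba mu m A)"

definition envy_free :: "(agent \<Rightarrow> nat \<Rightarrow> real) \<Rightarrow> nat \<Rightarrow> nat set \<Rightarrow> bool" where
  "envy_free mu m A \<longleftrightarrow> Envy mu m A \<le> 0"

definition OptEnvy :: "(agent \<Rightarrow> nat \<Rightarrow> real) \<Rightarrow> nat \<Rightarrow> real" where
  "OptEnvy mu m = Min (Envy mu m ` Pow (items m))"

text \<open>Probability space of all query outcomes when each item is queried tau times:
  outcome omega (i, t, nu) is the t-th observation of agent nu on item i, distributed
  N(mu nu i, sigma^2) (normal_density takes the standard deviation), all independent.\<close>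

definition query_space :: "nat \<Rightarrow> nat \<Rightarrow> (agent \<Rightarrow> nat \<Rightarrow> real) \<Rightarrow> real
    \<Rightarrow> (nat \<times> nat \<times> agent \<Rightarrow> real) measure" where
  "query_space m tau mu sd =
     PiM (items m \<times> {..<tau} \<times> UNIV)
         (\<lambda>(i, t, nu). density lborel (normal_density (mu nu i) sd))"

definition est :: "nat \<Rightarrow> (nat \<times> nat \<times> agent \<Rightarrow> real) \<Rightarrow> agent \<Rightarrow> nat \<Rightarrow> real" where
  "est tau omega nu i = (\<Sum>t<tau. omega (i, t, nu)) / real tau"

definition est_objective :: "nat \<Rightarrow> nat \<Rightarrow> (nat \<times> nat \<times> agent \<Rightarrow> real) \<Rightarrow> nat set \<Rightarrow> real" where
  "est_objective m tau omega A =
     min ((\<Sum>i\<in>A. est tau omega Agent_a i) - (\<Sum>i\<in>items m - A. est tau omega Agent_a i))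
         ((\<Sum>i\<in>items m - A. est tau omega Agent_b i) - (\<Sum>i\<in>A. est tau omega Agent_b i))"

definition alg_output :: "nat \<Rightarrow> nat \<Rightarrow> (nat \<times> nat \<times> agent \<Rightarrow> real) \<Rightarrow> nat set \<Rightarrow> bool" where
  "alg_output m tau omega A \<longleftrightarrow> A \<subseteq> items m \<and>
     (\<forall>B. B \<subseteq> items m \<longrightarrow> est_objective m tau omega B \<le> est_objective m tau omega A)"

text \<open>Per-item number of queries tau = q/m prescribed by the theorem.\<close>

definition queries_per_item :: "nat \<Rightarrow> real \<Rightarrow> real \<Rightarrow> real \<Rightarrow> nat" where
  "queries_per_item m sd Delta delta =
     nat \<lceil>32 * sd\<^sup>2 * ln (4 * real m / delta) * (real m)\<^sup>2 / Delta\<^sup>2\<rceil>"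

end

theory Submission
  imports Defs
begin

text \<open>
  Each empirical mean averages tau independent N(mu, sd^2) samples, so the Chernoff bound with
  the Gaussian moment generating function puts it within t = Delta / (2 m) of the true utility
  except with probability 2 exp (- tau t^2 / (2 sd^2)); for the prescribed tau a union bound over
  the 2 m estimates leaves failure probability at most delta. When all estimates are this close,
  the estimated envy of every allocation is within m t = Delta / 2 of its true envy. The algorithm
  minimises the estimated envy, and some allocation has true envy OptEnvy \<le> - Delta, so the
  output has true envy at most - Delta + 2 m t = 0.
\<close>

lemma UNIV_agent: "(UNIV :: agent set) = {Agent_a, Agent_b}"
  using agent.exhaust by auto

lemma normal_density_mult_exp:
  assumes "\<sigma> > 0"
  shows "normal_density \<mu> \<sigma> x * exp (l * (x - \<mu>))
    = exp (l\<^sup>2 * \<sigma>\<^sup>2 / 2) * normal_density (\<mu> + l * \<sigma>\<^sup>2) \<sigma> x"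
proof -
  have "- (x - \<mu>)\<^sup>2 / (2 * \<sigma>\<^sup>2) + l * (x - \<mu>)
      = l\<^sup>2 * \<sigma>\<^sup>2 / 2 + - (x - (\<mu> + l * \<sigma>\<^sup>2))\<^sup>2 / (2 * \<sigma>\<^sup>2)"
    using assms by (simp add: field_simps power2_eq_square)
  then show ?thesis unfolding normal_density_def
    by (simp add: exp_add[symmetric] mult.commute mult.left_commute)
qed

lemma nn_integral_exp_normal_density:
  assumes "\<sigma> > 0"
  shows "(\<integral>\<^sup>+x. ennreal (exp (l * (x - \<mu>))) \<partial>density lborel (normal_density \<mu> \<sigma>))
    = ennreal (exp (l\<^sup>2 * \<sigma>\<^sup>2 / 2))"
proof -
  have "(\<integral>\<^sup>+x. ennreal (exp (l * (x - \<mu>))) \<partial>density lborel (normal_density \<mu> \<sigma>))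
      = (\<integral>\<^sup>+x. ennreal (exp (l\<^sup>2 * \<sigma>\<^sup>2 / 2)) * ennreal (normal_density (\<mu> + l * \<sigma>\<^sup>2) \<sigma> x) \<partial>lborel)"
    using assms by (subst nn_integral_density)
      (auto intro!: nn_integral_cong simp: ennreal_mult'[symmetric] normal_density_mult_exp)
  also have "\<dots> = ennreal (exp (l\<^sup>2 * \<sigma>\<^sup>2 / 2))
      * (\<integral>\<^sup>+x. ennreal (normal_density (\<mu> + l * \<sigma>\<^sup>2) \<sigma> x) \<partial>lborel)"
    by (rule nn_integral_cmult) auto
  also have "(\<integral>\<^sup>+x. ennreal (normal_density (\<mu> + l * \<sigma>\<^sup>2) \<sigma> x) \<partial>lborel) = 1"
    using assms by (subst nn_integral_eq_integral) auto
  finally show ?thesis by simp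
qed

definition gaussian_product :: "'i set \<Rightarrow> ('i \<Rightarrow> real) \<Rightarrow> real \<Rightarrow> ('i \<Rightarrow> real) measure" where
  "gaussian_product I \<mu> \<sigma> = PiM I (\<lambda>k. density lborel (normal_density (\<mu> k) \<sigma>))"

lemma prob_space_gaussian_product: "\<sigma> > 0 \<Longrightarrow> prob_space (gaussian_product I \<mu> \<sigma>)"
  unfolding gaussian_product_def by (intro prob_space_PiM prob_space_normal_density)

lemma measurable_gaussian_product_component[measurable]:
  "(\<lambda>\<omega>. \<omega> k) \<in> borel_measurable (gaussian_product I \<mu> \<sigma>)"
proof (cases "k \<in> I")
  case True
  then have "(\<lambda>\<omega>. \<omega> k) \<in> measurable (gaussian_product I \<mu> \<sigma>) (density lborel (normal_density (\<mu> k) \<sigma>))"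
    unfolding gaussian_product_def by (rule measurable_component_singleton)
  then show ?thesis by simp
next
  case False
  have "\<omega> k = undefined" if "\<omega> \<in> space (gaussian_product I \<mu> \<sigma>)" for \<omega>
    using that False unfolding gaussian_product_def space_PiM by (rule PiE_arb)
  then show ?thesis by (subst measurable_cong[where g = "\<lambda>_. undefined"]) auto
qed

lemma gaussian_product_Chernoff:
  fixes \<mu> :: "'i \<Rightarrow> real" and a c l :: real
  assumes I: "finite I" and J: "J \<subseteq> I" and \<sigma>: "\<sigma> > 0" and l: "l > 0"
  defines "M \<equiv> gaussian_product I \<mu> \<sigma>"
  shows "emeasure M {\<omega> \<in> space M. a \<le> (\<Sum>k\<in>J. c * (\<omega> k - \<mu> k))}
    \<le> ennreal (exp (- l * a + real (card J) * ((l * c)\<^sup>2 * \<sigma>\<^sup>2 / 2)))"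
proof -
  define K where "K = (\<lambda>k. density lborel (normal_density (\<mu> k) \<sigma>))"
  interpret product_sigma_finite K
    unfolding product_sigma_finite_def K_def
    using \<sigma> by (auto intro: prob_space_imp_sigma_finite prob_space_normal_density)
  have M_eq: "M = PiM I K" unfolding M_def gaussian_product_def K_def ..
  define G where "G = (\<lambda>k x. if k \<in> J then ennreal (exp (l * c * (x - \<mu> k))) else 1)"
  have "emeasure M {\<omega> \<in> space M. a \<le> (\<Sum>k\<in>J. c * (\<omega> k - \<mu> k))}
      \<le> ennreal (exp (- l * a))
        * (\<integral>\<^sup>+\<omega>. ennreal (exp (l * (\<Sum>k\<in>J. c * (\<omega> k - \<mu> k)))) * indicator (space M) \<omega> \<partial>M)"
    by (rule Chernoff_ineq_nn_integral_ge[OF l sets.top]) (simp add: M_def)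
  also have "(\<integral>\<^sup>+\<omega>. ennreal (exp (l * (\<Sum>k\<in>J. c * (\<omega> k - \<mu> k)))) * indicator (space M) \<omega> \<partial>M)
      = (\<integral>\<^sup>+\<omega>. (\<Prod>k\<in>I. G k (\<omega> k)) \<partial>PiM I K)"
    unfolding M_eq
  proof (intro nn_integral_cong)
    fix \<omega> assume "\<omega> \<in> space (PiM I K)"
    have "(\<Prod>k\<in>I. G k (\<omega> k)) = (\<Prod>k\<in>J. ennreal (exp (l * c * (\<omega> k - \<mu> k))))"
      using prod.mono_neutral_right[OF I J, of "\<lambda>k. G k (\<omega> k)"] by (simp add: G_def)
    then show "ennreal (exp (l * (\<Sum>k\<in>J. c * (\<omega> k - \<mu> k)))) * indicator (space (PiM I K)) \<omega>
        = (\<Prod>k\<in>I. G k (\<omega> k))"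
      using \<open>\<omega> \<in> space (PiM I K)\<close> finite_subset[OF J I]
      by (simp add: prod_ennreal exp_sum sum_distrib_left mult.assoc)
  qed
  also have "\<dots> = (\<Prod>k\<in>I. integral\<^sup>N (K k) (G k))"
    by (rule product_nn_integral_prod[OF I]) (simp add: G_def K_def)
  also have "\<dots> = (\<Prod>k\<in>J. ennreal (exp ((l * c)\<^sup>2 * \<sigma>\<^sup>2 / 2)))"
  proof -
    have "integral\<^sup>N (K k) (G k) = 1" if "k \<notin> J" for k
      using that \<sigma> prob_space.emeasure_space_1[OF prob_space_normal_density, of \<sigma> "\<mu> k"]
      by (simp add: G_def K_def)
    moreover have "integral\<^sup>N (K k) (G k) = ennreal (exp ((l * c)\<^sup>2 * \<sigma>\<^sup>2 / 2))" if "k \<in> J" for k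
      using that nn_integral_exp_normal_density[OF \<sigma>, where l = "l * c" and \<mu> = "\<mu> k"]
      by (simp add: G_def K_def mult.assoc)
    ultimately show ?thesis
      by (simp add: prod.mono_neutral_right[OF I J])
  qed
  also have "ennreal (exp (- l * a)) * \<dots>
      = ennreal (exp (- l * a + real (card J) * ((l * c)\<^sup>2 * \<sigma>\<^sup>2 / 2)))"
    by (simp add: ennreal_power exp_of_nat_mult[symmetric] ennreal_mult[symmetric] mult_exp_exp)
  finally show ?thesis .
qed

lemma gaussian_product_sum_tail:
  fixes \<mu> :: "'i \<Rightarrow> real" and t :: real
  assumes I: "finite I" and J: "J \<subseteq> I" "J \<noteq> {}" and \<sigma>: "\<sigma> > 0" and t: "t > 0"
  defines "M \<equiv> gaussian_product I \<mu> \<sigma>"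
  shows "measure M {\<omega> \<in> space M. t \<le> \<bar>\<Sum>k\<in>J. \<omega> k - \<mu> k\<bar>}
    \<le> 2 * exp (- t\<^sup>2 / (2 * real (card J) * \<sigma>\<^sup>2))"
proof -
  interpret prob_space M unfolding M_def by (rule prob_space_gaussian_product[OF \<sigma>])
  define n where "n = real (card J)"
  have n: "n > 0" unfolding n_def using J I finite_subset by (simp add: card_gt_0_iff)
  define U where "U = (\<lambda>c. {\<omega> \<in> space M. t \<le> (\<Sum>k\<in>J. c * (\<omega> k - \<mu> k))})"
  have U_sets: "U c \<in> sets M" for c unfolding U_def M_def by measurable
  have U_bound: "measure M (U c) \<le> exp (- t\<^sup>2 / (2 * n * \<sigma>\<^sup>2))" if "c\<^sup>2 = 1" for c
  proof -
    define l where "l = t / (n * \<sigma>\<^sup>2)"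
    have "l > 0" unfolding l_def using t n \<sigma> by simp
    have "- l * t + n * ((l * c)\<^sup>2 * \<sigma>\<^sup>2 / 2) = - t\<^sup>2 / (2 * n * \<sigma>\<^sup>2)"
      using n \<sigma> that by (simp add: l_def power_mult_distrib field_simps power2_eq_square)
    then have "emeasure M (U c) \<le> ennreal (exp (- t\<^sup>2 / (2 * n * \<sigma>\<^sup>2)))"
      using gaussian_product_Chernoff[OF I J(1) \<sigma> \<open>l > 0\<close>, of \<mu> t c]
      unfolding U_def M_def n_def by simp
    then show ?thesis by (simp add: emeasure_eq_measure)
  qed
  have "{\<omega> \<in> space M. t \<le> \<bar>\<Sum>k\<in>J. \<omega> k - \<mu> k\<bar>} \<subseteq> U 1 \<union> U (- 1)"
    unfolding U_def by (auto simp: sum_subtractf abs_if split: if_splits)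
  then have "measure M {\<omega> \<in> space M. t \<le> \<bar>\<Sum>k\<in>J. \<omega> k - \<mu> k\<bar>} \<le> measure M (U 1) + measure M (U (- 1))"
    using U_sets by (meson finite_measure_mono measure_Un_le order_trans sets.Un)
  also have "\<dots> \<le> 2 * exp (- t\<^sup>2 / (2 * n * \<sigma>\<^sup>2))"
    using U_bound[of 1] U_bound[of "- 1"] by simp
  finally show ?thesis unfolding n_def .
qed

lemma query_space_eq_gaussian_product:
  "query_space m tau mu sd
    = gaussian_product (items m \<times> {..<tau} \<times> UNIV) (\<lambda>(i, t, nu). mu nu i) sd"
  unfolding query_space_def gaussian_product_def by (simp add: split_def)

lemma prob_space_query_space: "sd > 0 \<Longrightarrow> prob_space (query_space m tau mu sd)"
  unfolding query_space_eq_gaussian_product by (rule prob_space_gaussian_product)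

lemma measurable_est[measurable]: "(\<lambda>\<omega>. est tau \<omega> nu i) \<in> borel_measurable (query_space m tau mu sd)"
  unfolding query_space_eq_gaussian_product est_def by measurable

lemma est_deviation_tail:
  fixes mu :: "agent \<Rightarrow> nat \<Rightarrow> real"
  assumes sd: "sd > 0" and i: "i \<in> items m" and tau: "tau > 0" and t: "t > 0"
  defines "M \<equiv> query_space m tau mu sd"
  shows "measure M {\<omega> \<in> space M. t \<le> \<bar>est tau \<omega> nu i - mu nu i\<bar>}
    \<le> 2 * exp (- real tau * t\<^sup>2 / (2 * sd\<^sup>2))"
proof -
  define I where "I = items m \<times> {..<tau} \<times> (UNIV :: agent set)"
  define J where "J = (\<lambda>s. (i, s, nu)) ` {..<tau}"
  have I: "finite I" unfolding I_def items_def UNIV_agent by simp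
  have J: "J \<subseteq> I" "J \<noteq> {}" unfolding I_def J_def using i tau by auto
  have card_J: "card J = tau" unfolding J_def by (simp add: card_image inj_on_def)
  have "est tau \<omega> nu i - mu nu i = (\<Sum>k\<in>J. \<omega> k - (\<lambda>(i, t, nu). mu nu i) k) / real tau" for \<omega>
    using tau by (simp add: J_def est_def sum.reindex inj_on_def sum_subtractf field_simps)
  then have "{\<omega> \<in> space M. t \<le> \<bar>est tau \<omega> nu i - mu nu i\<bar>}
      = {\<omega> \<in> space M. real tau * t \<le> \<bar>\<Sum>k\<in>J. \<omega> k - (\<lambda>(i, t, nu). mu nu i) k\<bar>}"
    using tau by (auto simp: abs_divide le_divide_eq mult.commute)
  also have "measure M \<dots> \<le> 2 * exp (- (real tau * t)\<^sup>2 / (2 * real (card J) * sd\<^sup>2))"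
    unfolding M_def query_space_eq_gaussian_product I_def[symmetric]
    using t tau by (intro gaussian_product_sum_tail[OF I J sd]) simp
  also have "- (real tau * t)\<^sup>2 / (2 * real (card J) * sd\<^sup>2) = - real tau * t\<^sup>2 / (2 * sd\<^sup>2)"
    using tau unfolding card_J by (simp add: power2_eq_square)
  finally show ?thesis .
qed

lemma est_all_close_prob:
  fixes mu :: "agent \<Rightarrow> nat \<Rightarrow> real" and m :: nat
  assumes sd: "sd > 0" and tau: "tau > 0" and t: "t > 0"
  defines "M \<equiv> query_space m tau mu sd"
  shows "measure M {\<omega> \<in> space M. \<forall>nu. \<forall>i\<in>items m. \<bar>est tau \<omega> nu i - mu nu i\<bar> < t}
    \<ge> 1 - 4 * real m * exp (- real tau * t\<^sup>2 / (2 * sd\<^sup>2))"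
proof -
  interpret prob_space M unfolding M_def by (rule prob_space_query_space[OF sd])
  define P where "P = items m \<times> (UNIV :: agent set)"
  define bad where "bad = (\<lambda>(i, nu). {\<omega> \<in> space M. t \<le> \<bar>est tau \<omega> nu i - mu nu i\<bar>})"
  have P: "finite P" "card P = 2 * m" unfolding P_def items_def UNIV_agent by simp_all
  have bad_sets: "bad p \<in> sets M" for p unfolding bad_def M_def by (cases p) simp
  have "measure M (\<Union>p\<in>P. bad p) \<le> (\<Sum>p\<in>P. measure M (bad p))"
    using bad_sets by (intro finite_measure_subadditive_finite[OF P(1)]) blast
  also have "\<dots> \<le> (\<Sum>p\<in>P. 2 * exp (- real tau * t\<^sup>2 / (2 * sd\<^sup>2)))"
  proof (intro sum_mono)
    fix p assume "p \<in> P"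
    then show "measure M (bad p) \<le> 2 * exp (- real tau * t\<^sup>2 / (2 * sd\<^sup>2))"
      using est_deviation_tail[OF sd _ tau t, where i = "fst p" and m = m and mu = mu and nu = "snd p"]
      by (cases p) (simp add: P_def bad_def M_def)
  qed
  also have "\<dots> = 4 * real m * exp (- real tau * t\<^sup>2 / (2 * sd\<^sup>2))"
    using P(2) by simp
  finally have "1 - 4 * real m * exp (- real tau * t\<^sup>2 / (2 * sd\<^sup>2)) \<le> measure M (space M - (\<Union>p\<in>P. bad p))"
    using prob_compl[of "\<Union>p\<in>P. bad p"] sets.finite_UN[OF P(1) bad_sets] by simp
  also have "space M - (\<Union>p\<in>P. bad p) = {\<omega> \<in> space M. \<forall>nu. \<forall>i\<in>items m. \<bar>est tau \<omega> nu i - mu nu i\<bar> < t}"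
    by (auto simp: P_def bad_def not_le) (meson not_le)
  finally show ?thesis .
qed

lemma alg_output_event_sets:
  "{\<omega> \<in> space (query_space m tau mu sd). \<forall>A. alg_output m tau \<omega> A \<longrightarrow> Q A} \<in> sets (query_space m tau mu sd)"
proof -
  have "{\<omega> \<in> space (query_space m tau mu sd). \<forall>A. alg_output m tau \<omega> A \<longrightarrow> Q A}
      = space (query_space m tau mu sd) - (\<Union>A\<in>{A \<in> Pow (items m). \<not> Q A}. \<Inter>B\<in>Pow (items m).
          {\<omega> \<in> space (query_space m tau mu sd). est_objective m tau \<omega> B \<le> est_objective m tau \<omega> A})"
    unfolding alg_output_def by blast
  also have "\<dots> \<in> sets (query_space m tau mu sd)"
  proof -
    have "(\<lambda>\<omega>. est_objective m tau \<omega> A) \<in> borel_measurable (query_space m tau mu sd)" for A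
      unfolding est_objective_def by measurable
    then have "{\<omega> \<in> space (query_space m tau mu sd). est_objective m tau \<omega> B \<le> est_objective m tau \<omega> A}
        \<in> sets (query_space m tau mu sd)" for A B
      by measurable
    then show ?thesis
      by (intro sets.Diff sets.top sets.finite_UN sets.finite_INT ballI) (auto simp: items_def)
  qed
  finally show ?thesis .
qed

lemma Envy_diff_le:
  assumes A: "A \<subseteq> items m" and e: "\<And>nu i. i \<in> items m \<Longrightarrow> \<bar>f nu i - g nu i\<bar> \<le> e"
  shows "\<bar>Envy f m A - Envy g m A\<bar> \<le> real m * e"
proof -
  have fin: "finite (items m)" by (simp add: items_def)
  have key: "\<bar>(\<Sum>i\<in>items m - A. h i) - (\<Sum>i\<in>A. h i)\<bar> \<le> real m * e"
    if h: "\<And>i. i \<in> items m \<Longrightarrow> \<bar>h i\<bar> \<le> e" for h :: "nat \<Rightarrow> real"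
  proof -
    have "\<bar>(\<Sum>i\<in>items m - A. h i) - (\<Sum>i\<in>A. h i)\<bar> \<le> (\<Sum>i\<in>items m - A. \<bar>h i\<bar>) + (\<Sum>i\<in>A. \<bar>h i\<bar>)"
      by (rule order_trans[OF abs_triangle_ineq4 add_mono[OF sum_abs sum_abs]])
    also have "\<dots> = (\<Sum>i\<in>items m. \<bar>h i\<bar>)"
      using sum.subset_diff[OF A fin, of "\<lambda>i. \<bar>h i\<bar>"] by simp
    also have "\<dots> \<le> (\<Sum>i\<in>items m. e)" by (rule sum_mono) (rule h)
    also have "\<dots> = real m * e" by (simp add: items_def)
    finally show ?thesis .
  qed
  have "\<bar>envy_ab f m A - envy_ab g m A\<bar> \<le> real m * e"
    using key[of "\<lambda>i. f Agent_a i - g Agent_a i"] e unfolding envy_ab_def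
    by (simp add: sum_subtractf algebra_simps)
  moreover have "\<bar>envy_ba f m A - envy_ba g m A\<bar> \<le> real m * e"
    using key[of "\<lambda>i. g Agent_b i - f Agent_b i"] e unfolding envy_ba_def
    by (simp add: sum_subtractf algebra_simps abs_minus_commute)
  ultimately show ?thesis unfolding Envy_def by (simp add: abs_le_iff max_def)
qed

lemma est_objective_eq_uminus_Envy: "est_objective m tau \<omega> A = - Envy (est tau \<omega>) m A"
  unfolding est_objective_def Envy_def envy_ab_def envy_ba_def by (simp add: min_def max_def)

lemma OptEnvy_attained: "\<exists>A\<subseteq>items m. Envy mu m A = OptEnvy mu m"
proof -
  have "OptEnvy mu m \<in> Envy mu m ` Pow (items m)"
    unfolding OptEnvy_def by (intro Min_in) (auto simp: items_def)
  then show ?thesis by auto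
qed

lemma OptEnvy_no_items: "OptEnvy mu 0 = 0"
  unfolding OptEnvy_def Envy_def envy_ab_def envy_ba_def items_def by simp

lemma alg_output_envy_free:
  assumes close: "\<And>nu i. i \<in> items m \<Longrightarrow> \<bar>est tau \<omega> nu i - mu nu i\<bar> \<le> e"
    and margin: "2 * real m * e \<le> - OptEnvy mu m"
    and out: "alg_output m tau \<omega> A"
  shows "envy_free mu m A"
proof -
  obtain A' where A': "A' \<subseteq> items m" "Envy mu m A' = OptEnvy mu m"
    using OptEnvy_attained by blast
  have A: "A \<subseteq> items m" and max: "est_objective m tau \<omega> A' \<le> est_objective m tau \<omega> A"
    using out A' unfolding alg_output_def by auto
  have "Envy mu m A \<le> Envy (est tau \<omega>) m A + real m * e"
    using Envy_diff_le[where f = "est tau \<omega>" and g = mu, OF A close] by linarith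
  also have "\<dots> \<le> Envy (est tau \<omega>) m A' + real m * e"
    using max unfolding est_objective_eq_uminus_Envy by simp
  also have "\<dots> \<le> OptEnvy mu m + 2 * real m * e"
    using Envy_diff_le[where f = "est tau \<omega>" and g = mu, OF A'(1) close] A'(2) by linarith
  finally show ?thesis unfolding envy_free_def using margin by linarith
qed

lemma queries_per_item_tail:
  assumes m: "m > 0" and sd: "sd > 0" and Delta: "Delta > 0" and delta: "0 < delta" "delta < 1"
    and tau: "tau = queries_per_item m sd Delta delta"
  shows "tau > 0"
    and "4 * real m * exp (- real tau * (Delta / (2 * real m))\<^sup>2 / (2 * sd\<^sup>2)) \<le> delta"
proof -
  define L where "L = ln (4 * real m / delta)"
  have L: "L > 0" unfolding L_def using m delta by (simp add: ln_gt_zero_iff)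
  have "32 * sd\<^sup>2 * L * (real m)\<^sup>2 / Delta\<^sup>2 \<le> real tau"
    unfolding tau queries_per_item_def L_def by linarith
  moreover have "0 < 32 * sd\<^sup>2 * L * (real m)\<^sup>2 / Delta\<^sup>2" using sd L m Delta by simp
  ultimately show "tau > 0" by linarith
  have "4 * L = 32 * sd\<^sup>2 * L * (real m)\<^sup>2 / Delta\<^sup>2 * (Delta / (2 * real m))\<^sup>2 / (2 * sd\<^sup>2)"
    using sd Delta m by (simp add: field_simps power2_eq_square)
  also have "\<dots> \<le> real tau * (Delta / (2 * real m))\<^sup>2 / (2 * sd\<^sup>2)"
    using \<open>32 * sd\<^sup>2 * L * (real m)\<^sup>2 / Delta\<^sup>2 \<le> real tau\<close>
    by (intro divide_right_mono mult_right_mono) auto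
  finally have "exp (- real tau * (Delta / (2 * real m))\<^sup>2 / (2 * sd\<^sup>2)) \<le> exp (- L)"
    using L by simp
  also have "exp (- L) = delta / (4 * real m)"
    unfolding L_def using m delta by (simp add: exp_minus)
  finally show "4 * real m * exp (- real tau * (Delta / (2 * real m))\<^sup>2 / (2 * sd\<^sup>2)) \<le> delta"
    using m by (simp add: field_simps)
qed

theorem theorem1:
  fixes mu :: "agent \<Rightarrow> nat \<Rightarrow> real" and m :: nat
    and sd Delta delta :: real and tau q :: nat
  assumes "\<And>nu i. i \<in> items m \<Longrightarrow> 0 \<le> mu nu i \<and> mu nu i \<le> 1"
    and "Delta > 0" and "OptEnvy mu m \<le> - Delta"
    and "sd > 0"
    and "0 < delta" and "delta < 1"
    and "tau = queries_per_item m sd Delta delta"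
    and "q = m * tau"
  shows "measure (query_space m tau mu sd)
           {omega \<in> space (query_space m tau mu sd).
              \<forall>A. alg_output m tau omega A \<longrightarrow> envy_free mu m A} \<ge> 1 - delta"
proof -
  note Delta = assms(2) and opt = assms(3) and sd = assms(4)
  interpret prob_space "query_space m tau mu sd" by (rule prob_space_query_space[OF sd])
  have m: "m > 0" using Delta opt OptEnvy_no_items[of mu] by (cases m) auto
  define t where "t = Delta / (2 * real m)"
  have t: "t > 0" and margin: "2 * real m * t \<le> - OptEnvy mu m"
    using Delta opt m by (simp_all add: t_def)
  note tau = queries_per_item_tail[OF m sd Delta assms(5-7), folded t_def]
  have "1 - delta \<le> measure (query_space m tau mu sd) {\<omega> \<in> space (query_space m tau mu sd).
      \<forall>nu. \<forall>i\<in>items m. \<bar>est tau \<omega> nu i - mu nu i\<bar> < t}"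
    using est_all_close_prob[OF sd tau(1) t, of m mu] tau(2) by linarith
  also have "\<dots> \<le> measure (query_space m tau mu sd) {omega \<in> space (query_space m tau mu sd).
      \<forall>A. alg_output m tau omega A \<longrightarrow> envy_free mu m A}"
  proof (intro finite_measure_mono alg_output_event_sets subsetI)
    fix \<omega> assume "\<omega> \<in> {\<omega> \<in> space (query_space m tau mu sd).
      \<forall>nu. \<forall>i\<in>items m. \<bar>est tau \<omega> nu i - mu nu i\<bar> < t}"
    then show "\<omega> \<in> {omega \<in> space (query_space m tau mu sd).
      \<forall>A. alg_output m tau omega A \<longrightarrow> envy_free mu m A}"
      using alg_output_envy_free[OF less_imp_le margin, of tau \<omega>] by simp
  qed
  finally show ?thesis .
qed

end
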